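(* Let $\beta>1$ and define $\psi_\beta:[0,1]\to[0,1]$ by $\psi_\beta(x)=\psi_1(x):=2^{\beta-1}x^\beta$ for $x\in[0,1/2]$ and $\psi_\beta(x)=\psi_2(x):=2^{\beta-1}(x-1/2)^\beta+1/2$ for $x\in[1/2,1]$. Let $a_0=b_0=1$ and for $k\ge1$ let $$a_k=\int_0^{1/2}\int_0^{\psi_1(x_1)}\cdots\int_0^{\psi_1(x_{k-1})}dx_k\cdots dx_1,\qquad b_k=\int_{1/2}^{1}\int_{1/2}^{\psi_2(x_1)}\cdots\int_{1/2}^{\psi_2(x_{k-1})}dx_k\cdots dx_1,$$ $$d_k=\int_0^{1}\int_0^{\psi_\beta(x_1)}\cdots\int_0^{\psi_\beta(x_{k-1})}dx_k\cdots dx_1 .$$ Then for $n=1,2,\dots$: (1) $d_n=\sum_{l=0}^n b_l\,a_{n-l}$; (2) $d_n<\dfrac{\beta^{(-n^2/2+n)/4}}{n!}$. *)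

theory Defs
  imports "HOL-Analysis.Analysis"
begin

definition psi1 :: "real \<Rightarrow> real \<Rightarrow> real" where
  "psi1 \<beta> x = 2 powr (\<beta> - 1) * x powr \<beta>"

definition psi2 :: "real \<Rightarrow> real \<Rightarrow> real" where
  "psi2 \<beta> x = 2 powr (\<beta> - 1) * (x - 1/2) powr \<beta> + 1/2"

definition psi :: "real \<Rightarrow> real \<Rightarrow> real" where
  "psi \<beta> x = (if x \<le> 1/2 then psi1 \<beta> x else psi2 \<beta> x)"

text \<open>Iterated integral: iter_int lo f k y =
  int_lo^y int_lo^{f x_1} ... int_lo^{f x_(k-1)} dx_k ... dx_1, with iter_int lo f 0 y = 1.\<close>
fun iter_int :: "real \<Rightarrow> (real \<Rightarrow> real) \<Rightarrow> nat \<Rightarrow> real \<Rightarrow> real" where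
  "iter_int lo f 0 y = 1"
| "iter_int lo f (Suc k) y = integral {lo..y} (\<lambda>x. iter_int lo f k (f x))"

definition a_seq :: "real \<Rightarrow> nat \<Rightarrow> real" where
  "a_seq \<beta> k = iter_int 0 (psi1 \<beta>) k (1/2)"

definition b_seq :: "real \<Rightarrow> nat \<Rightarrow> real" where
  "b_seq \<beta> k = iter_int (1/2) (psi2 \<beta>) k 1"

definition d_seq :: "real \<Rightarrow> nat \<Rightarrow> real" where
  "d_seq \<beta> k = iter_int 0 (psi \<beta>) k 1"

end

theory Submission
  imports Defs
begin

text \<open>On [0,1/2] the map psi is the power map x \<mapsto> 2^(beta-1) x^beta, so its iterated integrals
  have the closed form C_k y^E_k with E_k = 1 + beta + ... + beta^(k-1). Since 1/2 is a fixed point,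
  a_(k+1) = a_k / (2 E_(k+1)), and AM-GM gives E_k \<ge> k beta^((k-1)/2), hence
  a_k \<le> 2^(-k) beta^(-k(k-1)/4) / k!. The second branch of psi is a translate of the first, so
  b_k = a_k. Since psi keeps [1/2,1] invariant, splitting the outermost integral of d_n at 1/2
  and expanding the upper part inductively yields the convolution formula. Summing the bounds,
  with -l(l-1)/4 - m(m-1)/4 = (n - n^2/2)/4 - (l-m)^2/8 for l + m = n and
  \<Sum> 1/(l! (n-l)!) = 2^n/n!, gives the estimate; it is strict because of the term l = 0.\<close>

definition power_iter_exp :: "real \<Rightarrow> nat \<Rightarrow> real" where
  "power_iter_exp p k = (\<Sum>t<k. p ^ t)"

lemma power_iter_exp_0 [simp]: "power_iter_exp p 0 = 0"
  by (simp add: power_iter_exp_def)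

lemma power_iter_exp_Suc: "power_iter_exp p (Suc k) = p * power_iter_exp p k + 1"
  unfolding power_iter_exp_def
  by (simp add: sum.lessThan_Suc_shift sum_distrib_left del: sum.lessThan_Suc)

lemma power_iter_exp_nonneg: "p \<ge> 0 \<Longrightarrow> power_iter_exp p k \<ge> 0"
  by (simp add: power_iter_exp_def sum_nonneg)

fun power_iter_coeff :: "real \<Rightarrow> real \<Rightarrow> nat \<Rightarrow> real" where
  "power_iter_coeff c p 0 = 1"
| "power_iter_coeff c p (Suc k) =
     power_iter_coeff c p k * c powr power_iter_exp p k / power_iter_exp p (Suc k)"

lemma powr_power_map:
  fixes c x p e :: real
  assumes "c \<ge> 0" "x \<ge> 0"
  shows "(c * x powr p) powr e = c powr e * x powr (p * e)"
  using assms by (simp add: powr_mult powr_powr)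

text \<open>The hypothesis c > 0 is needed because 0 powr 0 = 0.\<close>

lemma iter_int_power_map:
  fixes c p y :: real
  assumes "c > 0" "p \<ge> 0" "y \<ge> 0"
  shows "iter_int 0 (\<lambda>x. c * x powr p) (Suc k) y
       = power_iter_coeff c p (Suc k) * y powr power_iter_exp p (Suc k)"
  using assms(3)
proof (induction k arbitrary: y)
  case 0
  then show ?case using assms by (simp add: power_iter_exp_def)
next
  case (Suc k)
  let ?C = "power_iter_coeff c p (Suc k)" and ?E = "power_iter_exp p (Suc k)"
  have "p * ?E \<ge> 0" using power_iter_exp_nonneg assms(2) by simp
  then have "((\<lambda>x. x powr (p * ?E)) has_integral y powr (p * ?E + 1) / (p * ?E + 1)) {0..y}"
    using Suc.prems by (intro has_integral_powr_from_0) auto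
  then have "((\<lambda>x. ?C * c powr ?E * x powr (p * ?E))
      has_integral ?C * c powr ?E * (y powr (p * ?E + 1) / (p * ?E + 1))) {0..y}"
    by (rule has_integral_mult_right)
  moreover have "iter_int 0 (\<lambda>x. c * x powr p) (Suc k) (c * x powr p) = ?C * c powr ?E * x powr (p * ?E)"
    if "x \<in> {0..y}" for x
    using that Suc.IH[of "c * x powr p"] assms(1) powr_power_map[of c x p ?E] by simp
  ultimately have "((\<lambda>x. iter_int 0 (\<lambda>x. c * x powr p) (Suc k) (c * x powr p))
      has_integral ?C * c powr ?E * (y powr (p * ?E + 1) / (p * ?E + 1))) {0..y}"
    by (subst has_integral_cong) auto
  then have "iter_int 0 (\<lambda>x. c * x powr p) (Suc (Suc k)) y
      = ?C * c powr ?E * (y powr (p * ?E + 1) / (p * ?E + 1))"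
    by (simp only: iter_int.simps integral_unique)
  then show ?case by (simp add: power_iter_exp_Suc[of p "Suc k"])
qed

lemma integrable_iter_int_power_map:
  fixes c p y :: real
  assumes "c > 0" "p \<ge> 0" "y \<ge> 0"
  shows "(\<lambda>x. iter_int 0 (\<lambda>x. c * x powr p) k (c * x powr p)) integrable_on {0..y}"
proof (cases k)
  case 0
  then show ?thesis by (simp add: integrable_const_ivl)
next
  case (Suc j)
  let ?C = "power_iter_coeff c p k" and ?E = "power_iter_exp p k"
  have "p * ?E \<ge> 0" using power_iter_exp_nonneg assms(2) by simp
  then have "(\<lambda>x. x powr (p * ?E)) integrable_on {0..y}"
    using has_integral_powr_from_0[of "p * ?E" y] assms(3) by (auto intro: has_integral_integrable)
  then have int: "(\<lambda>x. ?C * c powr ?E * x powr (p * ?E)) integrable_on {0..y}"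
    by (rule integrable_on_mult_right)
  have eq: "iter_int 0 (\<lambda>x. c * x powr p) k (c * x powr p) = ?C * c powr ?E * x powr (p * ?E)"
    if "x \<in> {0..y}" for x
    using that Suc iter_int_power_map[OF assms(1,2), of "c * x powr p" j] assms(1)
      powr_power_map[of c x p ?E] by simp
  show ?thesis by (rule integrable_cong[THEN iffD2, OF eq int])
qed

lemma iter_int_power_map_Suc_at_fixed_point:
  fixes c p y :: real
  assumes "c > 0" "p \<ge> 0" "y > 0" "c * y powr p = y"
  shows "iter_int 0 (\<lambda>x. c * x powr p) (Suc k) y
       = iter_int 0 (\<lambda>x. c * x powr p) k y * y / power_iter_exp p (Suc k)"
proof (cases k)
  case 0
  then show ?thesis using assms(3) by (simp add: power_iter_exp_def)
next
  case (Suc j)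
  let ?C = "power_iter_coeff c p k" and ?E = "power_iter_exp p k"
  have "c powr ?E * y powr (p * ?E) = y powr ?E"
    using powr_power_map[of c y p ?E] assms by simp
  then have fixed: "c powr ?E * y powr power_iter_exp p (Suc k) = y powr ?E * y"
    using assms(3) by (simp add: power_iter_exp_Suc powr_add mult.commute)
  have "iter_int 0 (\<lambda>x. c * x powr p) (Suc k) y
      = ?C * (c powr ?E * y powr power_iter_exp p (Suc k)) / power_iter_exp p (Suc k)"
    using iter_int_power_map[OF assms(1,2), of y k] assms(3) by simp
  also have "\<dots> = ?C * y powr ?E * y / power_iter_exp p (Suc k)"
    by (simp only: fixed mult.assoc)
  also have "\<dots> = iter_int 0 (\<lambda>x. c * x powr p) k y * y / power_iter_exp p (Suc k)"
    using iter_int_power_map[OF assms(1,2), of y j] Suc assms(3) by simp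
  finally show ?thesis .
qed

lemma iter_int_translate:
  "iter_int lo (\<lambda>x. f (x - lo) + lo) k y = iter_int 0 f k (y - lo)"
proof (induction k arbitrary: y)
  case 0
  then show ?case by simp
next
  case (Suc k)
  have "iter_int lo (\<lambda>x. f (x - lo) + lo) (Suc k) y
      = integral {0 - - lo..(y - lo) - - lo} (\<lambda>x. iter_int 0 f k (f (x + - lo)))"
    by (simp only: iter_int.simps Suc.IH) simp
  also have "\<dots> = iter_int 0 f (Suc k) (y - lo)"
    by (subst integral_shift_real_ivl) simp
  finally show ?case .
qed

lemma iter_int_cong_on:
  assumes "\<And>x. x \<in> {lo..m} \<Longrightarrow> f x = g x"
    and "\<And>x. x \<in> {lo..m} \<Longrightarrow> f x \<in> {lo..m}"
    and "y \<in> {lo..m}"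
  shows "iter_int lo f k y = iter_int lo g k y"
  using assms(3)
proof (induction k arbitrary: y)
  case 0
  then show ?case by simp
next
  case (Suc k)
  have "iter_int lo f k (f x) = iter_int lo g k (g x)" if "x \<in> {lo..y}" for x
    using that Suc.prems Suc.IH[of "f x"] assms(1,2)[of x] by auto
  then show ?case by (simp only: iter_int.simps) (rule integral_cong)
qed

text \<open>Only [m,hi] has to be invariant: the integral over [lo,m] is iter_int lo f (Suc k) m
  by definition, and only the part over [m,y] is expanded by induction.\<close>

lemma iter_int_split:
  assumes "lo \<le> m"
    and maps: "\<And>x. x \<in> {m..hi} \<Longrightarrow> f x \<in> {m..hi}"
    and int_lo: "\<And>j. (\<lambda>x. iter_int lo f j (f x)) integrable_on {lo..m}"
    and int_hi: "\<And>j y. y \<in> {m..hi} \<Longrightarrow> (\<lambda>x. iter_int m f j (f x)) integrable_on {m..y}"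
    and "y \<in> {m..hi}"
  shows "iter_int lo f k y = (\<Sum>l=0..k. iter_int m f l y * iter_int lo f (k - l) m)"
  using assms(5)
proof (induction k arbitrary: y)
  case 0
  then show ?case by simp
next
  case (Suc k)
  have "((\<lambda>x. iter_int lo f k (f x)) has_integral iter_int lo f (Suc k) m) {lo..m}"
    using int_lo by (simp add: has_integral_integral)
  moreover have "((\<lambda>x. iter_int lo f k (f x)) has_integral
      (\<Sum>l=0..k. iter_int m f (Suc l) y * iter_int lo f (k - l) m)) {m..y}"
  proof (rule has_integral_spike_finite)
    show "((\<lambda>x. \<Sum>l=0..k. iter_int m f l (f x) * iter_int lo f (k - l) m) has_integral
        (\<Sum>l=0..k. iter_int m f (Suc l) y * iter_int lo f (k - l) m)) {m..y}"
    proof (intro has_integral_sum has_integral_mult_left ballI)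
      show "((\<lambda>x. iter_int m f l (f x)) has_integral iter_int m f (Suc l) y) {m..y}" for l
        using int_hi[OF Suc.prems] by (simp only: iter_int.simps has_integral_integral)
    qed simp
    fix x assume "x \<in> {m..y} - {}"
    then have "f x \<in> {m..hi}" using maps Suc.prems by auto
    then show "iter_int lo f k (f x) = (\<Sum>l=0..k. iter_int m f l (f x) * iter_int lo f (k - l) m)"
      using Suc.IH by simp
  qed simp
  ultimately have "iter_int lo f (Suc k) y
      = iter_int lo f (Suc k) m + (\<Sum>l=0..k. iter_int m f (Suc l) y * iter_int lo f (k - l) m)"
    using has_integral_combine[of lo m y] assms(1) Suc.prems
    by (simp only: iter_int.simps) (auto intro: integral_unique)
  also have "\<dots> = (\<Sum>l=0..Suc k. iter_int m f l y * iter_int lo f (Suc k - l) m)"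
    by (subst sum.atLeast0_atMost_Suc_shift) simp
  finally show ?case .
qed

lemma psi1_half [simp]: "psi1 b (1/2) = 1/2"
  by (simp add: psi1_def powr_diff powr_divide)

lemma psi1_mapsto:
  assumes "b \<ge> 0" "x \<in> {0..1/2}"
  shows "psi1 b x \<in> {0..1/2}"
proof -
  have "psi1 b x \<le> psi1 b (1/2)"
    using assms unfolding psi1_def by (auto intro: mult_left_mono powr_mono2)
  moreover have "0 \<le> psi1 b x" by (simp add: psi1_def)
  ultimately show ?thesis by simp
qed

lemma psi2_eq_translate: "psi2 b = (\<lambda>x. psi1 b (x - 1/2) + 1/2)"
  by (simp add: fun_eq_iff psi1_def psi2_def)

lemma psi2_mapsto:
  assumes "b \<ge> 0" "x \<in> {1/2..1}"
  shows "psi2 b x \<in> {1/2..1}"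
  using psi1_mapsto[OF assms(1), of "x - 1/2"] assms(2) by (simp add: psi2_eq_translate)

lemma psi_eq_psi1: "x \<le> 1/2 \<Longrightarrow> psi b x = psi1 b x"
  by (simp add: psi_def)

lemma psi_eq_psi2:
  assumes "x \<ge> 1/2"
  shows "psi b x = psi2 b x"
proof (cases "x = 1/2")
  case True
  have "psi b (1/2) = psi2 b (1/2)" by (simp add: psi_def psi2_eq_translate psi1_def[of b 0])
  then show ?thesis using True by (simp only:)
qed (use assms in \<open>simp add: psi_def\<close>)

lemma b_seq_eq_a_seq: "b_seq b k = a_seq b k"
  unfolding a_seq_def b_seq_def psi2_eq_translate iter_int_translate by simp

lemma a_seq_Suc:
  assumes "b \<ge> 0"
  shows "a_seq b (Suc k) = a_seq b k / (2 * power_iter_exp b (Suc k))"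
  using iter_int_power_map_Suc_at_fixed_point[of "2 powr (b - 1)" b "1/2" k] assms psi1_half[of b]
  unfolding a_seq_def psi1_def[abs_def] by simp

lemma iter_int_psi_eq_psi1:
  assumes "b \<ge> 0" "y \<in> {0..1/2}"
  shows "iter_int 0 (psi b) k y = iter_int 0 (psi1 b) k y"
  using assms psi1_mapsto psi_eq_psi1 by (intro iter_int_cong_on[where m = "1/2"]) auto

lemma iter_int_psi_eq_psi2:
  assumes "b \<ge> 0" "y \<in> {1/2..1}"
  shows "iter_int (1/2) (psi b) k y = iter_int (1/2) (psi2 b) k y"
  using assms psi2_mapsto psi_eq_psi2 by (intro iter_int_cong_on[where m = 1]) auto

lemma integrable_iter_int_psi_lower:
  assumes "b \<ge> 0"
  shows "(\<lambda>x. iter_int 0 (psi b) k (psi b x)) integrable_on {0..1/2}"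
proof -
  have int: "(\<lambda>x. iter_int 0 (psi1 b) k (psi1 b x)) integrable_on {0..1/2}"
    using integrable_iter_int_power_map[of "2 powr (b - 1)" b "1/2" k] assms
    unfolding psi1_def[abs_def] by simp
  have eq: "iter_int 0 (psi b) k (psi b x) = iter_int 0 (psi1 b) k (psi1 b x)"
    if "x \<in> {0..1/2}" for x
    using that assms psi_eq_psi1[of x b] iter_int_psi_eq_psi1 psi1_mapsto by auto
  show ?thesis by (rule integrable_cong[THEN iffD2, OF eq int])
qed

lemma integrable_iter_int_psi_upper:
  assumes "b \<ge> 0" "y \<in> {1/2..1}"
  shows "(\<lambda>x. iter_int (1/2) (psi b) k (psi b x)) integrable_on {1/2..y}"
proof -
  have "(\<lambda>x. iter_int 0 (psi1 b) k (psi1 b x)) integrable_on {0..y - 1/2}"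
    using integrable_iter_int_power_map[of "2 powr (b - 1)" b "y - 1/2" k] assms
    unfolding psi1_def[abs_def] by simp
  then have int: "(\<lambda>x. iter_int 0 (psi1 b) k (psi1 b (x - 1/2))) integrable_on {1/2..y}"
    using integrable_shift_real_ivl[of _ 0 "y - 1/2" "- 1/2"] by simp
  have eq: "iter_int (1/2) (psi b) k (psi b x) = iter_int 0 (psi1 b) k (psi1 b (x - 1/2))"
    if "x \<in> {1/2..y}" for x
    using that assms psi_eq_psi2[of x b] iter_int_psi_eq_psi2 psi2_mapsto
    by (auto simp: psi2_eq_translate iter_int_translate)
  show ?thesis by (rule integrable_cong[THEN iffD2, OF eq int])
qed

lemma d_seq_eq_convolution:
  assumes "b \<ge> 0"
  shows "d_seq b n = (\<Sum>l=0..n. b_seq b l * a_seq b (n - l))"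
proof -
  have "iter_int 0 (psi b) n 1
      = (\<Sum>l=0..n. iter_int (1/2) (psi b) l 1 * iter_int 0 (psi b) (n - l) (1/2))"
    using assms psi2_mapsto psi_eq_psi2 integrable_iter_int_psi_lower integrable_iter_int_psi_upper
    by (intro iter_int_split[where hi = 1]) auto
  then show ?thesis
    unfolding d_seq_def a_seq_def b_seq_def
    using assms iter_int_psi_eq_psi1 iter_int_psi_eq_psi2 by simp
qed

lemma power_add_power_ge_powr:
  fixes p :: real
  assumes "p > 0"
  shows "2 * p powr (real (s + t) / 2) \<le> p ^ s + p ^ t"
proof -
  have "p powr (real (s + t) / 2) = sqrt (p ^ s * p ^ t)"
    using assms by (simp add: powr_half_sqrt_powr powr_add powr_realpow)
  also have "\<dots> \<le> (p ^ s + p ^ t) / 2"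
    using assms by (intro arith_geo_mean_sqrt) auto
  finally show ?thesis by simp
qed

lemma power_iter_exp_ge:
  assumes "p > 0"
  shows "real k * p powr ((real k - 1) / 2) \<le> power_iter_exp p k"
proof -
  have "2 * power_iter_exp p k = (\<Sum>t<k. p ^ t + p ^ (k - Suc t))"
    unfolding power_iter_exp_def by (simp add: sum.distrib sum.nat_diff_reindex)
  also have "\<dots> \<ge> (\<Sum>t<k. 2 * p powr ((real k - 1) / 2))"
  proof (rule sum_mono)
    fix t assume "t \<in> {..<k}"
    then have "real (t + (k - Suc t)) = real k - 1" by (simp add: of_nat_diff)
    then show "2 * p powr ((real k - 1) / 2) \<le> p ^ t + p ^ (k - Suc t)"
      using power_add_power_ge_powr[OF assms, of t "k - Suc t"] by simp
  qed
  finally show ?thesis by simp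
qed

lemma a_seq_nonneg: "b \<ge> 0 \<Longrightarrow> a_seq b k \<ge> 0"
  by (induction k) (simp_all add: a_seq_def[of b 0] a_seq_Suc power_iter_exp_nonneg)

lemma a_seq_le:
  assumes "b > 0"
  shows "a_seq b k \<le> (1/2) ^ k * b powr (- real k * (real k - 1) / 4) / fact k"
proof (induction k)
  case 0
  then show ?case using assms by (simp add: a_seq_def)
next
  case (Suc k)
  have "0 < 2 * (real (Suc k) * b powr (real k / 2))" using assms by simp
  moreover have "2 * (real (Suc k) * b powr (real k / 2)) \<le> 2 * power_iter_exp b (Suc k)"
    using power_iter_exp_ge[OF assms, of "Suc k"] by simp
  ultimately have "a_seq b (Suc k)
      \<le> (1/2) ^ k * b powr (- real k * (real k - 1) / 4) / fact k / (2 * (real (Suc k) * b powr (real k / 2)))"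
    unfolding a_seq_Suc[OF less_imp_le[OF assms]]
    using Suc.IH a_seq_nonneg[of b k] assms by (intro frac_le) auto
  also have "\<dots> = (1/2) ^ Suc k * (b powr (- real k * (real k - 1) / 4) / b powr (real k / 2)) / fact (Suc k)"
    using assms by (simp add: field_simps)
  also have "b powr (- real k * (real k - 1) / 4) / b powr (real k / 2)
      = b powr (- real (Suc k) * (real (Suc k) - 1) / 4)"
  proof -
    have "- real (Suc k) * (real (Suc k) - 1) / 4 = - real k * (real k - 1) / 4 - real k / 2"
      by (simp add: field_simps)
    then show ?thesis by (simp only: powr_diff)
  qed
  finally show ?case .
qed

lemma a_seq_mult_le:
  assumes "b > 0"
  shows "a_seq b l * a_seq b m \<le> (1/2) ^ (l + m)
      * b powr ((real (l + m) - (real (l + m))\<^sup>2 / 2) / 4 - (real l - real m)\<^sup>2 / 8) / (fact l * fact m)"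
proof -
  have "a_seq b l * a_seq b m
      \<le> (1/2) ^ l * b powr (- real l * (real l - 1) / 4) / fact l
        * ((1/2) ^ m * b powr (- real m * (real m - 1) / 4) / fact m)"
    using assms a_seq_le a_seq_nonneg by (intro mult_mono) auto
  also have "\<dots> = (1/2) ^ (l + m)
      * b powr (- real l * (real l - 1) / 4 + - real m * (real m - 1) / 4) / (fact l * fact m)"
    by (simp only: power_add powr_add times_divide_times_eq mult_ac)
  also have "- real l * (real l - 1) / 4 + - real m * (real m - 1) / 4
      = (real (l + m) - (real (l + m))\<^sup>2 / 2) / 4 - (real l - real m)\<^sup>2 / 8"
    by (simp add: power2_eq_square field_simps)
  finally show ?thesis .
qed

lemma sum_inverse_fact_mult_fact:
  "(\<Sum>l=0..n. 1 / (fact l * fact (n - l)) :: real) = 2 ^ n / fact n"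
proof -
  have "(\<Sum>l=0..n. 1 / (fact l * fact (n - l)) :: real) = (\<Sum>l\<le>n. real (n choose l) / fact n)"
    by (simp add: atLeast0AtMost binomial_fact)
  also have "\<dots> = 2 ^ n / fact n"
    by (simp add: choose_row_sum flip: sum_divide_distrib of_nat_sum)
  finally show ?thesis .
qed

lemma a_seq_convolution_less:
  assumes "b > 1" "n \<ge> 1"
  shows "(\<Sum>l=0..n. a_seq b l * a_seq b (n - l)) < b powr ((real n - (real n)\<^sup>2 / 2) / 4) / fact n"
proof -
  let ?Y = "(real n - (real n)\<^sup>2 / 2) / 4"
  define g where "g l = (1/2) ^ n * b powr ?Y / (fact l * fact (n - l))" for l
  have term_le: "a_seq b l * a_seq b (n - l)
      \<le> (1/2) ^ n * b powr (?Y - (real l - real (n - l))\<^sup>2 / 8) / (fact l * fact (n - l))"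
    if "l \<le> n" for l
    using a_seq_mult_le[of b l "n - l"] assms(1) that by simp
  have "a_seq b l * a_seq b (n - l) \<le> g l" if "l \<in> {0..n}" for l
  proof -
    have "0 \<le> (real l - real (n - l))\<^sup>2 / 8" by simp
    then have "b powr (?Y - (real l - real (n - l))\<^sup>2 / 8) \<le> b powr ?Y"
      using assms(1) by (intro powr_mono) linarith+
    then have "(1/2) ^ n * b powr (?Y - (real l - real (n - l))\<^sup>2 / 8) / (fact l * fact (n - l)) \<le> g l"
      unfolding g_def by (intro divide_right_mono mult_left_mono) auto
    then show ?thesis using term_le[of l] that by simp
  qed
  moreover have "a_seq b 0 * a_seq b (n - 0) < g 0"
  proof -
    have "b powr (?Y - (real 0 - real n)\<^sup>2 / 8) < b powr ?Y"
      using assms by (intro powr_less_mono) auto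
    then have "(1/2) ^ n * b powr (?Y - (real 0 - real n)\<^sup>2 / 8) / (fact 0 * fact (n - 0)) < g 0"
      unfolding g_def by (intro divide_strict_right_mono mult_strict_left_mono) auto
    then show ?thesis using term_le[of 0] by simp
  qed
  ultimately have "(\<Sum>l=0..n. a_seq b l * a_seq b (n - l)) < sum g {0..n}"
    by (intro sum_strict_mono_ex1) (auto intro: bexI[of _ 0])
  also have "\<dots> = (1/2) ^ n * b powr ?Y * (\<Sum>l=0..n. 1 / (fact l * fact (n - l)))"
    by (simp add: g_def sum_distrib_left)
  also have "\<dots> = ((1/2) ^ n * 2 ^ n) * b powr ?Y / fact n"
    by (simp add: sum_inverse_fact_mult_fact)
  also have "\<dots> = b powr ?Y / fact n"
    by (simp add: power_mult_distrib[symmetric])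
  finally show ?thesis .
qed

theorem lemma4p6:
  fixes \<beta> :: real and n :: nat
  assumes "\<beta> > 1" and "n \<ge> 1"
  shows "d_seq \<beta> n = (\<Sum>l=0..n. b_seq \<beta> l * a_seq \<beta> (n - l))
     \<and> d_seq \<beta> n < \<beta> powr ((real n - (real n)\<^sup>2 / 2) / 4) / fact n"
proof
  show "d_seq \<beta> n = (\<Sum>l=0..n. b_seq \<beta> l * a_seq \<beta> (n - l))"
    using d_seq_eq_convolution assms(1) by simp
  then have "d_seq \<beta> n = (\<Sum>l=0..n. a_seq \<beta> l * a_seq \<beta> (n - l))"
    by (simp add: b_seq_eq_a_seq)
  also have "\<dots> < \<beta> powr ((real n - (real n)\<^sup>2 / 2) / 4) / fact n"
    using a_seq_convolution_less assms by blast
  finally show "d_seq \<beta> n < \<beta> powr ((real n - (real n)\<^sup>2 / 2) / 4) / fact n" .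
qed

end
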